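(* Let $D^2=\{z\in\mathbb{C}: |z|\le 1\}$ be the closed unit disk with the Euclidean topology, and take starting points $l=0$ (lion) and $m=1$ (man). Then the man has a strategy in $D^2$. Moreover, there is such a strategy $S:P_0(D^2)\to P_1(D^2)$ for which the man stays on the boundary of the disk during the whole pursuit, i.e. $|S(\beta)(t)|=1$ for all $\beta\in P_0(D^2)$ and all $t\ge 0$.
   Context: For a topological space $X$ and $x\in X$, let $P_x(X)$ be the set of continuous maps $\gamma:[0,+\infty)\to X$ with $\gamma(0)=x$. For $\gamma\in P_x(X)$ and $t\ge 0$, write $\gamma_{<t}=\gamma|_{[0,t)}$ and $\gamma_{\le t}=\gamma|_{[0,t]}$. Given starting points $m$ (man) and $l$ (lion) in $X$, a strategy for the man is a function $S:P_l(X)\to P_m(X)$ such that (i) for each $\beta\in P_l(X)$ and each $t\ge 0$, $S(\beta)(t)\neq\beta(t)$; and (ii) (no-lookahead rule) whenever $\beta,\beta'\in P_l(X)$ and $t\ge0$ satisfy $\beta_{<t}=\beta'_{<t}$, then $S(\beta)_{\le t}=S(\beta')_{\le t}$. No speed bound is imposed on the paths. The Axiom of Choice is assumed. *)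

theory Defs
  imports "HOL-Analysis.Analysis"
begin

text \<open>P_x(X): continuous maps [0,+oo) -> X starting at x. Paths are represented as
total functions real => 'a; only their values on [0,+oo) matter.\<close>
definition paths_from :: "'a topology \<Rightarrow> 'a \<Rightarrow> (real \<Rightarrow> 'a) set" where
  "paths_from X x = {\<gamma>. continuous_map (top_of_set {0..}) X \<gamma> \<and> \<gamma> 0 = x}"

definition man_strategy ::
  "'a topology \<Rightarrow> 'a \<Rightarrow> 'a \<Rightarrow> ((real \<Rightarrow> 'a) \<Rightarrow> (real \<Rightarrow> 'a)) \<Rightarrow> bool" where
  "man_strategy X m l S \<longleftrightarrow>
     (\<forall>\<beta>\<in>paths_from X l. S \<beta> \<in> paths_from X m) \<and>
     (\<forall>\<beta>\<in>paths_from X l. \<forall>t\<ge>0. S \<beta> t \<noteq> \<beta> t) \<and>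
     (\<forall>\<beta>\<in>paths_from X l. \<forall>\<beta>'\<in>paths_from X l. \<forall>t\<ge>0.
        (\<forall>s\<in>{0..<t}. \<beta> s = \<beta>' s) \<longrightarrow> (\<forall>s\<in>{0..t}. S \<beta> s = S \<beta>' s))"

end

theory Submission
  imports Defs
begin

text \<open>The man runs along the unit circle in alternating stages. In an even stage he stands
still, until the lion reaches the circle of radius 1/2. In an odd stage he escorts the lion:
he is at the antipode \<open>-sgn z\<close> of the lion \<open>z\<close>, rotated by an angle that fades out as \<open>|z|\<close>
grows from 1/2 to 3/4 and that is chosen so that the stage starts where the man stands; this
stage ends when the lion is back in the disk of radius 1/4. So the lion never catches the man:
while \<open>|z| < 3/4\<close> it is off the circle, and otherwise the man is at its antipode. Every stage
forces the lion across the annulus \<open>1/4 < |z| < 1/2\<close>, so by continuity only finitely many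
stages begin before any given time, which makes the man's path well defined and continuous.
It depends only on the lion's past because stages end at first hitting times.\<close>

definition first_hit :: "(real \<Rightarrow> 'a) \<Rightarrow> 'a set \<Rightarrow> real \<Rightarrow> real option" where
  "first_hit b A a = (if \<exists>u\<ge>a. b u \<in> A then Some (Inf {u. a \<le> u \<and> b u \<in> A}) else None)"

lemma first_hit_None_iff: "first_hit b A a = None \<longleftrightarrow> (\<forall>u\<ge>a. b u \<notin> A)"
  by (auto simp: first_hit_def)

lemma first_hit_ge: "first_hit b A a = Some c \<Longrightarrow> a \<le> c"
  by (auto simp: first_hit_def split: if_splits intro: cInf_greatest)

lemma first_hit_le: "first_hit b A a = Some c \<Longrightarrow> a \<le> u \<Longrightarrow> b u \<in> A \<Longrightarrow> c \<le> u"
  by (auto simp: first_hit_def bdd_below_def split: if_splits intro: cInf_lower)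

lemma first_hit_SomeD:
  fixes b :: "real \<Rightarrow> 'a::topological_space"
  assumes "continuous_on {a..} b" "closed A" "first_hit b A a = Some c"
  shows "b c \<in> A" "\<forall>u\<in>{a..<c}. b u \<notin> A"
proof -
  let ?H = "{u. a \<le> u \<and> b u \<in> A}"
  have ne: "?H \<noteq> {}" and c: "c = Inf ?H"
    using assms(3) by (auto simp: first_hit_def split: if_splits)
  have "closed ({a..} \<inter> b -` A)"
    by (rule continuous_closed_preimage[OF assms(1) closed_atLeast assms(2)])
  moreover have "{a..} \<inter> b -` A = ?H" by auto
  ultimately have "c \<in> ?H"
    unfolding c by (intro closed_contains_Inf ne) (auto simp: bdd_below_def)
  then show "b c \<in> A" by simp
  show "\<forall>u\<in>{a..<c}. b u \<notin> A"
    using first_hit_le[OF assms(3)] by force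
qed

lemma first_hit_agree_upto:
  fixes b b' :: "real \<Rightarrow> 'a::topological_space"
  assumes cb: "continuous_on {a..} b" and cb': "continuous_on {a..} b'" and A: "closed A"
    and agree: "\<forall>u\<in>{a..t}. b u = b' u"
  shows "first_hit b A a = first_hit b' A a \<or>
    pred_option ((<) t) (first_hit b A a) \<and> pred_option ((<) t) (first_hit b' A a)"
proof (cases "\<exists>u\<in>{a..t}. b u \<in> A")
  case True
  then obtain u where u: "a \<le> u" "u \<le> t" "b u \<in> A" "b' u \<in> A" using agree by auto
  then obtain c c' where c: "first_hit b A a = Some c" and c': "first_hit b' A a = Some c'"
    by (metis first_hit_None_iff not_None_eq)
  have "c \<le> u" using first_hit_le[OF c u(1,3)] .
  moreover have "c' \<le> u" using first_hit_le[OF c' u(1,4)] .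
  moreover have "a \<le> c" "a \<le> c'" using first_hit_ge c c' by auto
  ultimately have "c \<in> {a..t}" "c' \<in> {a..t}" using u(2) by auto
  moreover have "b c \<in> A" "b' c' \<in> A"
    using first_hit_SomeD(1) cb cb' A c c' by auto
  ultimately have "b' c \<in> A" "b c' \<in> A" using agree by auto
  then have "c = c'"
    using first_hit_le c c' \<open>a \<le> c\<close> \<open>a \<le> c'\<close> by (metis order.antisym)
  then show ?thesis using c c' by simp
next
  case False
  have "pred_option ((<) t) (first_hit g A a)"
    if "continuous_on {a..} g" "\<forall>u\<in>{a..t}. g u \<notin> A" for g :: "real \<Rightarrow> 'a"
  proof (cases "first_hit g A a")
    case (Some c)
    then show ?thesis
      using first_hit_ge[OF Some] first_hit_SomeD(1)[OF that(1) A Some] that(2) by force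
  qed simp
  then show ?thesis using False agree cb cb' by auto
qed

lemma closed_contains_image_Icc:
  fixes f :: "real \<Rightarrow> 'a::topological_space"
  assumes "continuous_on {a..c} f" "closed B" "f a \<in> B" "f ` {a..<c} \<subseteq> B"
  shows "f ` {a..c} \<subseteq> B"
proof (cases "a < c")
  case True
  have "closed ({a..c} \<inter> f -` B)"
    by (rule continuous_closed_preimage[OF assms(1) closed_atLeastAtMost assms(2)])
  moreover have "{a..<c} \<subseteq> {a..c} \<inter> f -` B" using assms(4) by auto
  ultimately have "closure {a..<c} \<subseteq> {a..c} \<inter> f -` B" by (rule closure_minimal[rotated])
  then show ?thesis using True by auto
next
  case False
  then have "{a..c} \<subseteq> {a}" by auto
  then show ?thesis using assms(3) by auto
qed

lemma eq_on_Icc_if_eq_on_Ico: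
  fixes f g :: "real \<Rightarrow> 'a::real_normed_vector"
  assumes "continuous_on {a..} f" "continuous_on {a..} g" "f a = g a" "\<forall>s\<in>{a..<t}. f s = g s"
  shows "\<forall>s\<in>{a..t}. f s = g s"
proof -
  have "continuous_on {a..t} (\<lambda>s. f s - g s)"
    by (intro continuous_intros continuous_on_subset[OF assms(1)] continuous_on_subset[OF assms(2)])
      auto
  then have "(\<lambda>s. f s - g s) ` {a..t} \<subseteq> {0}"
    by (rule closed_contains_image_Icc) (use assms(3,4) in auto)
  then show ?thesis by auto
qed

lemma continuous_on_atLeast_if_Icc:
  fixes f :: "real \<Rightarrow> 'a::topological_space"
  assumes "\<And>T. continuous_on {a..T} f"
  shows "continuous_on {a..} f"
  unfolding continuous_on_eq_continuous_within
proof
  fix x :: real assume "x \<in> {a..}"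
  then have "continuous (at x within {a..x+1}) f"
    using assms by (simp add: continuous_on_eq_continuous_within)
  moreover have "at x within {a..} = at x within {a..x+1}"
    by (rule at_within_nhd[of _ "{..<x+1}"]) auto
  ultimately show "continuous (at x within {a..}) f" by simp
qed

text \<open>Stage \<open>k\<close> ends when the lion enters \<open>switch_set k\<close>; until then it stays in
\<open>stage_region k\<close>, and it starts the stage in \<open>stage_entry k\<close>.\<close>

definition switch_set :: "nat \<Rightarrow> complex set" where
  "switch_set k = (if even k then {z. 1/2 \<le> cmod z} else {z. cmod z \<le> 1/4})"

definition stage_region :: "nat \<Rightarrow> complex set" where
  "stage_region k = (if even k then {z. cmod z \<le> 1/2} else {z. 1/4 \<le> cmod z})"

definition stage_entry :: "nat \<Rightarrow> complex set" where
  "stage_entry k = (if even k then {z. cmod z \<le> 1/4} else {z. cmod z = 1/2})"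

lemma closed_switch_set: "closed (switch_set k)"
  unfolding switch_set_def by (auto intro!: closed_Collect_le continuous_intros)

lemma closed_stage_region: "closed (stage_region k)"
  unfolding stage_region_def by (auto intro!: closed_Collect_le continuous_intros)

lemma stage_entry_subset_region: "stage_entry k \<subseteq> stage_region k"
  by (auto simp: stage_entry_def stage_region_def)

lemma not_switch_set_in_region: "z \<notin> switch_set k \<Longrightarrow> z \<in> stage_region k"
  by (auto simp: switch_set_def stage_region_def)

lemma switch_set_region_subset_entry: "switch_set k \<inter> stage_region k \<subseteq> stage_entry (Suc k)"
  by (auto simp: switch_set_def stage_region_def stage_entry_def)

lemma stage_entry_gap:
  "z \<in> stage_entry k \<Longrightarrow> w \<in> stage_entry (Suc k) \<Longrightarrow> 1/4 \<le> \<bar>cmod w - cmod z\<bar>"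
  by (cases "even k") (auto simp: stage_entry_def)

fun switch_time :: "(real \<Rightarrow> complex) \<Rightarrow> nat \<Rightarrow> real option" where
  "switch_time b 0 = Some 0"
| "switch_time b (Suc k) = Option.bind (switch_time b k) (first_hit b (switch_set k))"

lemma switch_time_SucD:
  assumes "switch_time b (Suc k) = Some c"
  obtains a where "switch_time b k = Some a" "first_hit b (switch_set k) a = Some c" "a \<le> c"
  using assms by (auto simp: bind_eq_Some_conv dest: first_hit_ge)

lemma switch_time_nonneg: "switch_time b k = Some a \<Longrightarrow> 0 \<le> a"
proof (induction k arbitrary: a)
  case (Suc k)
  then show ?case by (metis switch_time_SucD order.trans)
qed simp

lemma pred_option_switch_time_Suc:
  assumes "\<And>a c. a \<le> c \<Longrightarrow> P a \<Longrightarrow> P c" "pred_option P (switch_time b k)"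
  shows "pred_option P (switch_time b (Suc k))"
proof (cases "switch_time b (Suc k)")
  case (Some c)
  then obtain a where "switch_time b k = Some a" "a \<le> c" by (rule switch_time_SucD)
  then show ?thesis using assms Some by auto
qed simp

text \<open>\<open>settled b k t\<close>: stage \<open>k\<close> does not start before \<open>t\<close>, so the stages before \<open>k\<close>
already fix the man's position up to time \<open>t\<close>.\<close>

definition settled :: "(real \<Rightarrow> complex) \<Rightarrow> nat \<Rightarrow> real \<Rightarrow> bool" where
  "settled b k t \<longleftrightarrow> pred_option ((\<le>) t) (switch_time b k)"

definition ramp :: "real \<Rightarrow> real" where
  "ramp r = max 0 (min 1 (3 - 4 * r))"

text \<open>The angle \<open>Arg (- p / sgn c)\<close> makes the escort start at \<open>p\<close> when the lion is at \<open>c\<close>.\<close>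

definition stage_move :: "nat \<Rightarrow> complex \<Rightarrow> complex \<Rightarrow> complex \<Rightarrow> complex" where
  "stage_move k p c z =
     (if even k then p else - sgn z * cis (Arg (- p / sgn c) * ramp (cmod z)))"

fun man_upto :: "(real \<Rightarrow> complex) \<Rightarrow> nat \<Rightarrow> real \<Rightarrow> complex" where
  "man_upto b 0 t = 1"
| "man_upto b (Suc k) t = (case switch_time b k of
     None \<Rightarrow> man_upto b k t
   | Some a \<Rightarrow> if t \<le> a then man_upto b k t else stage_move k (man_upto b k a) (b a) (b t))"

definition man :: "(real \<Rightarrow> complex) \<Rightarrow> real \<Rightarrow> complex" where
  "man b t = man_upto b (LEAST k. settled b k t) t"

definition safe :: "complex \<Rightarrow> complex \<Rightarrow> bool" where
  "safe z w \<longleftrightarrow> cmod w = 1 \<and> (3/4 \<le> cmod z \<longrightarrow> w = - sgn z)"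

lemma safe_imp_neq: "safe z w \<Longrightarrow> w \<noteq> z"
  by (auto simp: safe_def sgn_div_norm)

lemma stage_move_start:
  assumes "cmod p = 1" "c \<in> stage_entry k"
  shows "stage_move k p c c = p"
proof (cases "even k")
  case False
  let ?u = "- p / sgn c"
  have c: "cmod c = 1/2" using False assms(2) by (simp add: stage_entry_def)
  then have "sgn c \<noteq> 0" "cmod ?u = 1"
    using assms(1) by (auto simp: norm_divide norm_sgn sgn_eq_0_iff)
  then have "cis (Arg ?u) = sgn ?u" by (intro cis_Arg) auto
  also have "\<dots> = ?u" using \<open>cmod ?u = 1\<close> by (simp add: sgn_div_norm)
  moreover have "ramp (cmod c) = 1" using c by (simp add: ramp_def)
  ultimately show ?thesis using False \<open>sgn c \<noteq> 0\<close> by (simp add: stage_move_def)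
qed (simp add: stage_move_def)

lemma safe_stage_move:
  assumes "cmod p = 1" "z \<in> stage_region k"
  shows "safe z (stage_move k p c z)"
  using assms
  by (cases "even k") (auto simp: safe_def stage_move_def stage_region_def norm_mult norm_sgn ramp_def)

lemma continuous_on_stage_move:
  assumes "continuous_on S b" "b ` S \<subseteq> stage_region k"
  shows "continuous_on S (\<lambda>t. stage_move k p c (b t))"
proof (cases "even k")
  case False
  then have "\<forall>t\<in>S. b t \<noteq> 0" using assms(2) by (force simp: stage_region_def)
  then show ?thesis
    using False unfolding stage_move_def ramp_def by (simp, intro continuous_intros assms(1))
qed (simp add: stage_move_def)

lemma lion_in_stage_region:
  assumes cb: "continuous_on {0..} b"
    and a: "switch_time b k = Some a" and entry: "b a \<in> stage_entry k"
    and T: "settled b (Suc k) T"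
  shows "b ` {a..T} \<subseteq> stage_region k"
proof (rule closed_contains_image_Icc)
  have a0: "0 \<le> a" using switch_time_nonneg[OF a] .
  then show "continuous_on {a..T} b" by (intro continuous_on_subset[OF cb]) auto
  show "b a \<in> stage_region k" using entry stage_entry_subset_region by blast
  have "b u \<notin> switch_set k" if "u \<in> {a..<T}" for u
  proof (cases "first_hit b (switch_set k) a")
    case (Some c)
    have "T \<le> c" using T Some a by (simp add: settled_def)
    moreover have "continuous_on {a..} b" using a0 by (intro continuous_on_subset[OF cb]) auto
    ultimately show ?thesis using first_hit_SomeD(2)[OF _ closed_switch_set Some] that by auto
  qed (use that first_hit_None_iff in auto)
  then show "b ` {a..<T} \<subseteq> stage_region k" using not_switch_set_in_region by blast
qed (rule closed_stage_region)

lemma lion_at_switch_time: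
  assumes cb: "continuous_on {0..} b" and b0: "b 0 = 0"
  shows "switch_time b k = Some c \<Longrightarrow> b c \<in> stage_entry k"
proof (induction k arbitrary: c)
  case 0
  then show ?case using b0 by (simp add: stage_entry_def)
next
  case (Suc k)
  obtain a where a: "switch_time b k = Some a" and c: "first_hit b (switch_set k) a = Some c"
    and "a \<le> c"
    using switch_time_SucD[OF Suc.prems] by blast
  have "settled b (Suc k) c" using Suc.prems by (simp add: settled_def)
  from lion_in_stage_region[OF cb a Suc.IH[OF a] this]
  have "b c \<in> stage_region k" using \<open>a \<le> c\<close> by auto
  moreover have "continuous_on {a..} b"
    using switch_time_nonneg[OF a] by (intro continuous_on_subset[OF cb]) auto
  then have "b c \<in> switch_set k" using first_hit_SomeD(1)[OF _ closed_switch_set c] by blast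
  ultimately show ?case using switch_set_region_subset_entry by blast
qed

text \<open>The lion's distance from the origin jumps by at least 1/4 between consecutive switch
times, which a convergent sequence of switch times would contradict.\<close>

lemma ex_settled:
  assumes cb: "continuous_on {0..} b" and b0: "b 0 = 0"
  shows "\<exists>k. settled b k t"
proof (rule ccontr)
  assume none: "\<nexists>k. settled b k t"
  have "\<exists>a. switch_time b k = Some a \<and> a < t" for k
  proof -
    have "\<not> settled b k t" using none by blast
    then show ?thesis by (cases "switch_time b k") (auto simp: settled_def)
  qed
  then obtain x where x: "\<And>k. switch_time b k = Some (x k)" "\<And>k. x k < t" by metis
  have x0: "0 \<le> x k" for k using switch_time_nonneg[OF x(1)] .
  have "x k \<le> x (Suc k)" for k
    by (rule switch_time_SucD[OF x(1)[of "Suc k"]]) (use x(1)[of k] in simp)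
  then have "incseq x" by (rule incseq_SucI)
  moreover have bdd: "bdd_above (range x)" using x(2) by (meson bdd_aboveI2 less_imp_le)
  ultimately have lim: "x \<longlonglongrightarrow> (SUP k. x k)" by (intro LIMSEQ_incseq_SUP)
  define r where "r = cmod (b (SUP k. x k))"
  have "0 \<le> (SUP k. x k)" using x0[of 0] cSUP_upper[OF _ bdd, of 0] by simp
  moreover have "continuous_on {0..} (\<lambda>u. cmod (b u))" by (rule continuous_on_norm[OF cb])
  ultimately have "(\<lambda>k. cmod (b (x k))) \<longlonglongrightarrow> r"
    unfolding r_def using x0 by (intro continuous_on_tendsto_compose[OF _ lim]) auto
  then have "(\<lambda>k. \<bar>cmod (b (x (Suc k))) - cmod (b (x k))\<bar>) \<longlonglongrightarrow> \<bar>r - r\<bar>"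
    by (intro tendsto_rabs tendsto_diff LIMSEQ_Suc)
  moreover have "1/4 \<le> \<bar>cmod (b (x (Suc k))) - cmod (b (x k))\<bar>" for k
    using lion_at_switch_time[OF cb b0 x(1)[of k]] lion_at_switch_time[OF cb b0 x(1)[of "Suc k"]]
    by (rule stage_entry_gap)
  ultimately have "(1/4 :: real) \<le> 0" by (intro tendsto_lowerbound) auto
  then show False by simp
qed

lemma settled_Suc:
  assumes "settled b k t"
  shows "settled b (Suc k) t \<and> man_upto b (Suc k) t = man_upto b k t"
proof
  show "settled b (Suc k) t"
    using assms unfolding settled_def by (rule pred_option_switch_time_Suc[rotated]) simp
  show "man_upto b (Suc k) t = man_upto b k t"
    using assms by (cases "switch_time b k") (auto simp: settled_def)
qed

lemma settled_mono:
  assumes "settled b k t" "k \<le> j"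
  shows "settled b j t \<and> man_upto b j t = man_upto b k t"
  using assms(2)
proof (induction j rule: dec_induct)
  case (step j)
  then show ?case using settled_Suc[of b j t] by simp
qed (use assms(1) in simp)

lemma settled_le: "settled b k t \<Longrightarrow> s \<le> t \<Longrightarrow> settled b k s"
  by (cases "switch_time b k") (auto simp: settled_def)

lemma man_eq_man_upto:
  assumes "settled b k t"
  shows "man b t = man_upto b k t"
proof -
  let ?j = "LEAST k. settled b k t"
  have "settled b ?j t" "?j \<le> k" using assms by (auto intro: LeastI Least_le)
  from settled_mono[OF this] show ?thesis by (simp add: man_def)
qed

lemma man_upto_Suc_on_stage:
  assumes cb: "continuous_on {0..} b" and b0: "b 0 = 0"
    and a: "switch_time b k = Some a" and p: "cmod (man_upto b k a) = 1"
    and T: "settled b (Suc k) T"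
  shows "continuous_on {a..T} (man_upto b (Suc k)) \<and>
    (\<forall>t\<in>{a..T}. safe (b t) (man_upto b (Suc k) t))"
proof -
  let ?move = "\<lambda>t. stage_move k (man_upto b k a) (b a) (b t)"
  have entry: "b a \<in> stage_entry k" by (rule lion_at_switch_time[OF cb b0 a])
  have region: "b ` {a..T} \<subseteq> stage_region k" by (rule lion_in_stage_region[OF cb a entry T])
  have eq: "\<forall>t\<in>{a..T}. ?move t = man_upto b (Suc k) t"
    using a stage_move_start[OF p entry] by auto
  have "continuous_on {a..T} b"
    using switch_time_nonneg[OF a] by (intro continuous_on_subset[OF cb]) auto
  then have "continuous_on {a..T} ?move" using region by (rule continuous_on_stage_move)
  then have "continuous_on {a..T} (man_upto b (Suc k))"
    by (rule continuous_on_eq) (use eq in auto)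
  moreover have "\<forall>t\<in>{a..T}. safe (b t) (man_upto b (Suc k) t)"
  proof
    fix t assume t: "t \<in> {a..T}"
    then have "safe (b t) (?move t)" using safe_stage_move[OF p] region by blast
    with eq t show "safe (b t) (man_upto b (Suc k) t)" by (simp del: man_upto.simps)
  qed
  ultimately show ?thesis ..
qed

lemma man_upto_continuous_safe:
  assumes cb: "continuous_on {0..} b" and b0: "b 0 = 0"
  shows "settled b k T \<Longrightarrow>
    continuous_on {0..T} (man_upto b k) \<and> (\<forall>t\<in>{0..T}. safe (b t) (man_upto b k t))"
proof (induction k arbitrary: T)
  case 0
  then have "{0..T} \<subseteq> {0}" by (auto simp: settled_def)
  then show ?case using b0 by (auto simp: safe_def)
next
  case (Suc k)
  show ?case
  proof (cases "switch_time b k")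
    case None
    then have "man_upto b (Suc k) = man_upto b k" by (simp add: fun_eq_iff)
    then show ?thesis using Suc.IH[of T] None by (simp add: settled_def)
  next
    case (Some a)
    define T' where "T' = min T a"
    have "settled b k T'" using Some by (simp add: settled_def T'_def)
    then have IH: "continuous_on {0..T'} (man_upto b k)" "\<forall>t\<in>{0..T'}. safe (b t) (man_upto b k t)"
      using Suc.IH by auto
    have "\<forall>t\<in>{0..T'}. man_upto b k t = man_upto b (Suc k) t" using Some by (auto simp: T'_def)
    then have before: "continuous_on {0..T'} (man_upto b (Suc k))"
        "\<forall>t\<in>{0..T'}. safe (b t) (man_upto b (Suc k) t)"
      using continuous_on_eq[OF IH(1)] IH(2) by auto
    show ?thesis
    proof (cases "T \<le> a")
      case True
      then show ?thesis using before by (simp add: T'_def)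
    next
      case False
      have "cmod (man_upto b k a) = 1"
        using IH(2) switch_time_nonneg[OF Some] False by (auto simp: safe_def T'_def)
      then have after: "continuous_on {a..T} (man_upto b (Suc k))"
          "\<forall>t\<in>{a..T}. safe (b t) (man_upto b (Suc k) t)"
        using man_upto_Suc_on_stage[OF cb b0 Some _ Suc.prems] by auto
      have "{0..T} = {0..T'} \<union> {a..T}"
        using False switch_time_nonneg[OF Some] by (auto simp: T'_def)
      then show ?thesis
        using continuous_on_closed_Un[OF closed_atLeastAtMost closed_atLeastAtMost before(1) after(1)]
          before(2) after(2) by auto
    qed
  qed
qed

lemma safe_man:
  assumes "continuous_on {0..} b" "b 0 = 0" "0 \<le> t"
  shows "safe (b t) (man b t)"
proof -
  obtain k where k: "settled b k t" using ex_settled[OF assms(1,2)] by blast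
  then show ?thesis
    using man_upto_continuous_safe[OF assms(1,2) k] man_eq_man_upto[OF k] assms(3) by simp
qed

lemma continuous_on_man:
  assumes "continuous_on {0..} b" "b 0 = 0"
  shows "continuous_on {0..} (man b)"
proof (rule continuous_on_atLeast_if_Icc)
  fix T
  obtain k where k: "settled b k T" using ex_settled[OF assms] by blast
  have "\<forall>t\<in>{0..T}. man_upto b k t = man b t"
    by (auto intro!: man_eq_man_upto[symmetric] settled_le[OF k])
  then show "continuous_on {0..T} (man b)"
    using man_upto_continuous_safe[OF assms k] continuous_on_eq by blast
qed

lemma man_at_0: "man b 0 = 1"
  using man_eq_man_upto[of b 0 0] by (simp add: settled_def)

lemma switch_time_man_upto_agree:
  assumes cb: "continuous_on {0..} b" and cb': "continuous_on {0..} b'"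
    and agree: "\<forall>s\<in>{0..t}. b s = b' s"
  shows "(switch_time b k = switch_time b' k \<or>
      pred_option ((<) t) (switch_time b k) \<and> pred_option ((<) t) (switch_time b' k)) \<and>
    (\<forall>s\<in>{0..t}. man_upto b k s = man_upto b' k s)"
proof (induction k)
  case (Suc k)
  then have IH: "\<forall>s\<in>{0..t}. man_upto b k s = man_upto b' k s" by blast
  show ?case
  proof (cases "pred_option ((<) t) (switch_time b k) \<and> pred_option ((<) t) (switch_time b' k)")
    case True
    have "pred_option ((<) t) (switch_time g (Suc k))"
      if "pred_option ((<) t) (switch_time g k)" for g
      using that by (rule pred_option_switch_time_Suc[rotated]) simp
    then have "pred_option ((<) t) (switch_time b (Suc k))"
        "pred_option ((<) t) (switch_time b' (Suc k))"
      using True by blast+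
    moreover have "\<forall>s\<in>{0..t}. man_upto b (Suc k) s = man_upto b' (Suc k) s"
      using True IH by (auto split: option.splits)
    ultimately show ?thesis by blast
  next
    case False
    then have same: "switch_time b k = switch_time b' k" using Suc.IH by blast
    show ?thesis
    proof (cases "switch_time b k")
      case None
      then show ?thesis using same IH by simp
    next
      case (Some a)
      have a0: "0 \<le> a" using switch_time_nonneg[OF Some] .
      have "a \<le> t" using False by (simp add: Some flip: same)
      have "continuous_on {a..} b" "continuous_on {a..} b'"
        using a0 by (auto intro: continuous_on_subset[OF cb] continuous_on_subset[OF cb'])
      then have "first_hit b (switch_set k) a = first_hit b' (switch_set k) a \<or>
          pred_option ((<) t) (first_hit b (switch_set k) a) \<and>
          pred_option ((<) t) (first_hit b' (switch_set k) a)"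
        using agree a0 by (intro first_hit_agree_upto closed_switch_set) auto
      moreover have "man_upto b (Suc k) s = man_upto b' (Suc k) s" if "s \<in> {0..t}" for s
        using Some same IH[rule_format, of a] IH[rule_format, of s]
          agree[rule_format, of a] agree[rule_format, of s] that a0 \<open>a \<le> t\<close> by auto
      ultimately show ?thesis using Some same by auto
    qed
  qed
qed simp

lemma man_agree:
  assumes cb: "continuous_on {0..} b" "b 0 = 0" and cb': "continuous_on {0..} b'" "b' 0 = 0"
    and agree: "\<forall>s\<in>{0..t}. b s = b' s" and s: "s \<in> {0..t}"
  shows "man b s = man b' s"
proof -
  obtain k k' where "settled b k t" "settled b' k' t" using ex_settled cb cb' by metis
  then have "settled b (max k k') t" "settled b' (max k k') t" using settled_mono by auto
  then have "settled b (max k k') s" "settled b' (max k k') s" using settled_le s by auto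
  then have "man b s = man_upto b (max k k') s" "man b' s = man_upto b' (max k k') s"
    using man_eq_man_upto by auto
  then show ?thesis using switch_time_man_upto_agree[OF cb(1) cb'(1) agree] s by auto
qed

lemma paths_from_cball_iff:
  "\<beta> \<in> paths_from (top_of_set (cball (0::complex) 1)) x \<longleftrightarrow>
    continuous_on {0..} \<beta> \<and> \<beta> ` {0..} \<subseteq> cball 0 1 \<and> \<beta> 0 = x"
  by (auto simp: paths_from_def Pi_def)

theorem mainTheorem8:
  shows "(\<exists>S. man_strategy (top_of_set (cball (0::complex) 1)) 1 0 S) \<and>
         (\<exists>S. man_strategy (top_of_set (cball (0::complex) 1)) 1 0 S \<and>
              (\<forall>\<beta>\<in>paths_from (top_of_set (cball (0::complex) 1)) 0. \<forall>t\<ge>0. cmod (S \<beta> t) = 1))"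
proof -
  let ?D = "top_of_set (cball (0::complex) 1)"
  have lion: "continuous_on {0..} \<beta>" "\<beta> 0 = 0" if "\<beta> \<in> paths_from ?D 0" for \<beta>
    using that by (auto simp: paths_from_cball_iff)
  have safe: "safe (\<beta> t) (man \<beta> t)" if "\<beta> \<in> paths_from ?D 0" "0 \<le> t" for \<beta> t
    using safe_man[OF lion[OF that(1)] that(2)] .
  have "man \<beta> \<in> paths_from ?D 1" if "\<beta> \<in> paths_from ?D 0" for \<beta>
  proof -
    have "man \<beta> ` {0..} \<subseteq> cball 0 1" using safe[OF that] by (auto simp: safe_def)
    then show ?thesis
      using continuous_on_man[OF lion[OF that]] man_at_0 by (simp add: paths_from_cball_iff)
  qed
  moreover have "\<forall>s\<in>{0..t}. man \<beta> s = man \<beta>' s"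
    if "\<beta> \<in> paths_from ?D 0" "\<beta>' \<in> paths_from ?D 0" "\<forall>s\<in>{0..<t}. \<beta> s = \<beta>' s" for \<beta> \<beta>' t
  proof -
    have "\<forall>s\<in>{0..t}. \<beta> s = \<beta>' s"
      using eq_on_Icc_if_eq_on_Ico[OF lion(1)[OF that(1)] lion(1)[OF that(2)] _ that(3)]
        lion(2)[OF that(1)] lion(2)[OF that(2)] by simp
    then show ?thesis using man_agree[OF lion[OF that(1)] lion[OF that(2)]] by blast
  qed
  ultimately have "man_strategy ?D 1 0 man"
    using safe safe_imp_neq by (auto simp: man_strategy_def)
  moreover have "\<forall>\<beta>\<in>paths_from ?D 0. \<forall>t\<ge>0. cmod (man \<beta> t) = 1"
    using safe by (auto simp: safe_def)
  ultimately show ?thesis by blast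
qed

end
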